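(* Let $\mathcal{S}=(T,T^+)$ be a concrete regularity structure, let $M=(\Pi,g)$ be a model over $\mathcal{S}$, let $\gamma\in\mathbb{R}$, and let $\mathbf{v}\in\mathcal{D}^\gamma(\mathcal{S},g)$. Set $\Lambda_x=\Pi_x(\mathbf{v}(x))$ for $x\in\mathbb{R}^d$. Then the family $(\Lambda_x)_{x\in\mathbb{R}^d}$ satisfies the $\gamma$-coherence estimate: there exists $C<\infty$ such that for all $x,y\in\mathbb{R}^d$ and all $0<t\le1$, $$\big|\langle\Lambda_y-\Lambda_x,p_t(x,\cdot)\rangle\big|\le C\sum_{\tau\in\mathbf{B},\,|\tau|<\gamma}t^{|\tau|/2}\big(|y-x|+t^{1/2}\big)^{\gamma-|\tau|}.$$
   Context: $p_t(x,y)$ is the heat kernel on $\mathbb{R}^d$ and $\langle\cdot,\cdot\rangle$ the distribution/test-function pairing. A concrete regularity structure $\mathcal{S}=(T,T^+)$ consists of graded vector spaces $T=\bigoplus_{a\in A}T_a$ and $T^+=\bigoplus_{\alpha\in A^+}T^+_\alpha$ with each $T_a$, $T^+_\alpha$ finite dimensional, where $A\subset\mathbb{R}$ is locally finite and bounded below and $A^+\subset[0,\infty)$ contains $0$; $T^+$ is a Hopf algebra with coproduct $\Delta^+:T^+\to T^+\otimes T^+$, unit $\mathbf{1}_+$ and counit $\mathbf{1}'_+$; and there is a linear map $\Delta:T\to T\otimes T^+$ with $(\Delta\otimes\mathrm{Id})\Delta=(\mathrm{Id}\otimes\Delta^+)\Delta$, $(\mathrm{Id}\otimes\mathbf{1}'_+)\Delta=\mathrm{Id}$,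 and $\Delta T_a\subset\bigoplus_{\alpha\in A^+}T_{a-\alpha}\otimes T^+_\alpha$ for all $a\in A$. Fix a basis $\mathbf{B}_a$ of each $T_a$ and let $\mathbf{B}=\bigcup_a\mathbf{B}_a$; for $\tau\in\mathbf{B}_a$ write $|\tau|=a$; for $h\in T$ write $h_\tau$ for its coefficient on $\tau\in\mathbf{B}$; let $\mathbf{B}^+$ be a similarly graded basis of $T^+$. $G^+$ is the set of real-valued linear multiplicative maps on $T^+$. A model $M=(\Pi,g)$ is a family of linear maps $\Pi_x:T\to\mathcal{S}'(\mathbb{R}^d)$ ($x\in\mathbb{R}^d$) and characters $g_{yx}\in G^+$ ($x,y\in\mathbb{R}^d$) such that $(g_{zy}\otimes g_{yx})\Delta^+=g_{zx}$ and, with $\Gamma_{yx}=(\mathrm{Id}\otimes g_{yx})\Delta:T\to T$, one has $\Pi_x(\tau)=\Pi_y(\Gamma_{yx}\tau)$ for all $x,y,z$ and $\tau\in T$; and for each $c\in\mathbb{R}$, $\sup_{\mu\in\mathbf{B}^+,|\mu|\le c}\sup_{x,y}|g_{yx}(\mu)|/|y-x|^{|\mu|}<\infty$ and $\sup_{\tau\in\mathbf{B},|\tau|\le c}\sup_{0<t\le1}\sup_x t^{-|\tau|/2}|\langle\Pi_x(\tau),p_t(x,\cdot)\rangle|<\infty$. With $T_{<\gamma}=\bigoplus_{a<\gamma}T_a$, $\mathcal{D}^\gamma(\mathcal{S},g)$ is the space of functions $\mathbf{v}:\mathbb{R}^d\to T_{<\gamma}$ with $\max_{\tau\in\mathbf{B},|\tau|<\gamma}\sup_{x\neq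 y}\big(|\mathbf{v}(x)_\tau|+|(\mathbf{v}(y)-\Gamma_{yx}\mathbf{v}(x))_\tau|/|y-x|^{\gamma-|\tau|}\big)<\infty$. A family $(\Lambda_x)$ of distributions satisfies the $\gamma$-coherence estimate if there are finitely many exponents $\beta_i\le\gamma$ and $C$ with $|\langle\Lambda_y-\Lambda_x,p_t(x,\cdot)\rangle|\le C\sum_it^{\beta_i/2}(|y-x|+t^{1/2})^{\gamma-\beta_i}$ for all $x,y$ and $0<t\le1$. *)

theory Defs
  imports "HOL-Analysis.Analysis"
begin

text \<open>Elements of T are finitely supported coefficient functions on the basis type 'b
  (graded by deg), elements of T^+ are finitely supported coefficient functions on
  the basis type 'c (graded by degp).  Linear maps are given on basis elements by
  their coefficients (structure constants).\<close>

definition fsum :: "('a \<Rightarrow> real) \<Rightarrow> real" where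
  "fsum f = sum f {x. f x \<noteq> 0}"

definition kd :: "'a \<Rightarrow> 'a \<Rightarrow> real" where
  "kd a b = (if a = b then 1 else 0)"

text \<open>r^a with the convention 0^0 = 1 (for r \<ge> 0).\<close>
definition pw :: "real \<Rightarrow> real \<Rightarrow> real" where
  "pw r a = (if a = 0 then 1 else r powr a)"

definition graded_T :: "real set \<Rightarrow> ('b \<Rightarrow> real) \<Rightarrow> bool" where
  "graded_T A deg \<longleftrightarrow> (\<forall>b. deg b \<in> A) \<and> (\<forall>a. finite {b. deg b = a})
     \<and> (\<forall>r. finite (A \<inter> {-r..r})) \<and> bdd_below A"

definition graded_Tp :: "real set \<Rightarrow> ('c \<Rightarrow> real) \<Rightarrow> bool" where
  "graded_Tp Ap degp \<longleftrightarrow> (\<forall>b. degp b \<in> Ap) \<and> (\<forall>a. finite {b. degp b = a})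
     \<and> Ap \<subseteq> {0..} \<and> 0 \<in> Ap"

text \<open>Hopf algebra on the vector space with basis 'c:
  mp a b k = coefficient of k in a*b; unit = 1_+; cop a k l = coefficient of k (x) l in
  Delta^+ a; cou = counit 1'_+; ant a k = coefficient of k in S a (antipode).\<close>
definition hopf_algebra ::
  "('c \<Rightarrow> 'c \<Rightarrow> 'c \<Rightarrow> real) \<Rightarrow> ('c \<Rightarrow> real) \<Rightarrow> ('c \<Rightarrow> 'c \<Rightarrow> 'c \<Rightarrow> real)
    \<Rightarrow> ('c \<Rightarrow> real) \<Rightarrow> ('c \<Rightarrow> 'c \<Rightarrow> real) \<Rightarrow> bool" where
  "hopf_algebra mp unit cop cou ant \<longleftrightarrow>
    (\<forall>a b. finite {k. mp a b k \<noteq> 0}) \<and> finite {k. unit k \<noteq> 0}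
    \<and> (\<forall>a. finite {(k, l). cop a k l \<noteq> 0}) \<and> (\<forall>a. finite {k. ant a k \<noteq> 0})
    \<comment> \<open>associativity and unit\<close>
    \<and> (\<forall>a b c k. fsum (\<lambda>j. mp a b j * mp j c k) = fsum (\<lambda>j. mp b c j * mp a j k))
    \<and> (\<forall>a k. fsum (\<lambda>j. unit j * mp j a k) = kd a k)
    \<and> (\<forall>a k. fsum (\<lambda>j. unit j * mp a j k) = kd a k)
    \<comment> \<open>coassociativity and counit\<close>
    \<and> (\<forall>a k l n. fsum (\<lambda>j. cop a j n * cop j k l) = fsum (\<lambda>j. cop a k j * cop j l n))
    \<and> (\<forall>a l. fsum (\<lambda>k. cou k * cop a k l) = kd a l)
    \<and> (\<forall>a k. fsum (\<lambda>l. cop a k l * cou l) = kd a k)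
    \<comment> \<open>bialgebra compatibility\<close>
    \<and> (\<forall>a b k l. fsum (\<lambda>j. mp a b j * cop j k l)
          = fsum (\<lambda>(a1, a2, b1, b2). cop a a1 a2 * cop b b1 b2 * mp a1 b1 k * mp a2 b2 l))
    \<and> (\<forall>k l. fsum (\<lambda>j. unit j * cop j k l) = unit k * unit l)
    \<and> (\<forall>a b. fsum (\<lambda>j. mp a b j * cou j) = cou a * cou b)
    \<and> fsum (\<lambda>j. unit j * cou j) = 1
    \<comment> \<open>antipode\<close>
    \<and> (\<forall>a k. fsum (\<lambda>(j, l, j'). cop a j l * ant j j' * mp j' l k) = cou a * unit k)
    \<and> (\<forall>a k. fsum (\<lambda>(j, l, l'). cop a j l * ant l l' * mp j l' k) = cou a * unit k)"

text \<open>Coaction Delta : T -> T (x) T^+, D tau sigma mu = coefficient of sigma (x) mu in Delta tau.\<close>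
definition comodule ::
  "('b \<Rightarrow> real) \<Rightarrow> ('c \<Rightarrow> real) \<Rightarrow> ('c \<Rightarrow> 'c \<Rightarrow> 'c \<Rightarrow> real) \<Rightarrow> ('c \<Rightarrow> real)
    \<Rightarrow> ('b \<Rightarrow> 'b \<Rightarrow> 'c \<Rightarrow> real) \<Rightarrow> bool" where
  "comodule deg degp cop cou D \<longleftrightarrow>
    (\<forall>\<tau>. finite {(\<sigma>, \<mu>). D \<tau> \<sigma> \<mu> \<noteq> 0})
    \<and> (\<forall>\<tau> \<sigma> \<mu> \<nu>. fsum (\<lambda>\<rho>. D \<tau> \<rho> \<nu> * D \<rho> \<sigma> \<mu>) = fsum (\<lambda>\<rho>. D \<tau> \<sigma> \<rho> * cop \<rho> \<mu> \<nu>))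
    \<and> (\<forall>\<tau> \<sigma>. fsum (\<lambda>\<mu>. D \<tau> \<sigma> \<mu> * cou \<mu>) = kd \<tau> \<sigma>)
    \<and> (\<forall>\<tau> \<sigma> \<mu>. D \<tau> \<sigma> \<mu> \<noteq> 0 \<longrightarrow> deg \<sigma> = deg \<tau> - degp \<mu>)"

definition concrete_RS ::
  "real set \<Rightarrow> ('b \<Rightarrow> real) \<Rightarrow> real set \<Rightarrow> ('c \<Rightarrow> real)
   \<Rightarrow> ('c \<Rightarrow> 'c \<Rightarrow> 'c \<Rightarrow> real) \<Rightarrow> ('c \<Rightarrow> real) \<Rightarrow> ('c \<Rightarrow> 'c \<Rightarrow> 'c \<Rightarrow> real)
   \<Rightarrow> ('c \<Rightarrow> real) \<Rightarrow> ('c \<Rightarrow> 'c \<Rightarrow> real) \<Rightarrow> ('b \<Rightarrow> 'b \<Rightarrow> 'c \<Rightarrow> real) \<Rightarrow> bool" where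
  "concrete_RS A deg Ap degp mp unit cop cou ant D \<longleftrightarrow>
     graded_T A deg \<and> graded_Tp Ap degp \<and> hopf_algebra mp unit cop cou ant
     \<and> comodule deg degp cop cou D"

text \<open>Elements of G^+: linear multiplicative maps T^+ -> R (given by values on the basis).\<close>
definition character :: "('c \<Rightarrow> 'c \<Rightarrow> 'c \<Rightarrow> real) \<Rightarrow> ('c \<Rightarrow> real) \<Rightarrow> bool" where
  "character mp g \<longleftrightarrow> (\<forall>a b. fsum (\<lambda>k. mp a b k * g k) = g a * g b)"

text \<open>Gamma_g h = (Id (x) g) Delta h, for h in T.\<close>
definition Gam :: "('b \<Rightarrow> 'b \<Rightarrow> 'c \<Rightarrow> real) \<Rightarrow> ('c \<Rightarrow> real) \<Rightarrow> ('b \<Rightarrow> real) \<Rightarrow> ('b \<Rightarrow> real)" where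
  "Gam D g h = (\<lambda>\<sigma>. fsum (\<lambda>\<tau>. h \<tau> * fsum (\<lambda>\<mu>. D \<tau> \<sigma> \<mu> * g \<mu>)))"

text \<open>Distributions, modelled as linear functionals acting on test functions.\<close>
definition distribution :: "(('a \<Rightarrow> real) \<Rightarrow> real) \<Rightarrow> bool" where
  "distribution L \<longleftrightarrow> (\<forall>\<phi> \<psi> a b. L (\<lambda>z. a * \<phi> z + b * \<psi> z) = a * L \<phi> + b * L \<psi>)"

definition piT :: "('b \<Rightarrow> ('a \<Rightarrow> real) \<Rightarrow> real) \<Rightarrow> ('b \<Rightarrow> real) \<Rightarrow> ('a \<Rightarrow> real) \<Rightarrow> real" where
  "piT P h = (\<lambda>\<phi>. fsum (\<lambda>\<tau>. h \<tau> * P \<tau> \<phi>))"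

definition heat :: "real \<Rightarrow> 'a::euclidean_space \<Rightarrow> 'a \<Rightarrow> real" where
  "heat t x y = (4 * pi * t) powr (- real DIM('a) / 2) * exp (- (norm (x - y))\<^sup>2 / (4 * t))"

definition is_model ::
  "('c \<Rightarrow> 'c \<Rightarrow> 'c \<Rightarrow> real) \<Rightarrow> ('c \<Rightarrow> 'c \<Rightarrow> 'c \<Rightarrow> real) \<Rightarrow> ('b \<Rightarrow> real) \<Rightarrow> ('c \<Rightarrow> real)
   \<Rightarrow> ('b \<Rightarrow> 'b \<Rightarrow> 'c \<Rightarrow> real)
   \<Rightarrow> ('a::euclidean_space \<Rightarrow> 'b \<Rightarrow> ('a \<Rightarrow> real) \<Rightarrow> real) \<Rightarrow> ('a \<Rightarrow> 'a \<Rightarrow> 'c \<Rightarrow> real) \<Rightarrow> bool" where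
  "is_model mp cop deg degp D Pix g \<longleftrightarrow>
     (\<forall>x \<tau>. distribution (Pix x \<tau>))
     \<and> (\<forall>x y. character mp (g y x))
     \<and> (\<forall>x y z k. fsum (\<lambda>(a, b). cop k a b * g z y a * g y x b) = g z x k)
     \<and> (\<forall>x y \<tau>. Pix x \<tau> = piT (Pix y) (Gam D (g y x) (kd \<tau>)))
     \<and> (\<forall>c. \<exists>K. \<forall>\<mu> x y. degp \<mu> \<le> c \<longrightarrow> \<bar>g y x \<mu>\<bar> \<le> K * pw (norm (y - x)) (degp \<mu>))
     \<and> (\<forall>c. \<exists>K. \<forall>\<tau> t x. deg \<tau> \<le> c \<longrightarrow> 0 < t \<longrightarrow> t \<le> 1 \<longrightarrow>
            \<bar>Pix x \<tau> (heat t x)\<bar> \<le> K * t powr (deg \<tau> / 2))"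

definition Dgamma ::
  "('b \<Rightarrow> real) \<Rightarrow> ('b \<Rightarrow> 'b \<Rightarrow> 'c \<Rightarrow> real) \<Rightarrow> ('a::real_normed_vector \<Rightarrow> 'a \<Rightarrow> 'c \<Rightarrow> real)
     \<Rightarrow> real \<Rightarrow> ('a \<Rightarrow> 'b \<Rightarrow> real) \<Rightarrow> bool" where
  "Dgamma deg D g \<gamma> v \<longleftrightarrow>
     (\<forall>x \<tau>. \<gamma> \<le> deg \<tau> \<longrightarrow> v x \<tau> = 0)
     \<and> (\<exists>K. \<forall>\<tau> x y. deg \<tau> < \<gamma> \<longrightarrow> x \<noteq> y \<longrightarrow>
          \<bar>v x \<tau>\<bar> + \<bar>v y \<tau> - Gam D (g y x) (v x) \<tau>\<bar> / norm (y - x) powr (\<gamma> - deg \<tau>) \<le> K)"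

end

theory Submission
  imports Defs
begin

text \<open>Since \<open>\<Pi>\<^sub>x = \<Pi>\<^sub>y \<Gamma>\<^sub>y\<^sub>x\<close>, the increment \<open>\<Lambda>\<^sub>y - \<Lambda>\<^sub>x\<close> equals
  \<open>\<Pi>\<^sub>y w\<close> with \<open>w = v(y) - \<Gamma>\<^sub>y\<^sub>x v(x)\<close>, and re-expanding around the centre \<open>x\<close> of the
  heat kernel gives \<open>\<Pi>\<^sub>x (\<Gamma>\<^sub>x\<^sub>y w)\<close>. The coefficient of \<open>\<rho>\<close> in \<open>\<Gamma>\<^sub>x\<^sub>y w\<close> collects
  terms \<open>w\<^sub>\<sigma> g\<^sub>x\<^sub>y(\<mu>)\<close> with \<open>|\<rho>| = |\<sigma>| - |\<mu>|\<close>, each of size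
  \<open>|y - x|\<^bsup>\<gamma>-|\<sigma>|\<^esup> |y - x|\<^bsup>|\<mu>|\<^esup> = |y - x|\<^bsup>\<gamma>-|\<rho>|\<^esup>\<close>, while testing \<open>\<Pi>\<^sub>x \<rho>\<close>
  against \<open>p\<^sub>t(x,\<cdot>)\<close> costs \<open>t\<^bsup>|\<rho>|/2\<^esup>\<close>. All sums are finite because only finitely
  many basis elements have degree below \<open>\<gamma>\<close>.\<close>

lemma fsum_eq_sum: "finite F \<Longrightarrow> {z. f z \<noteq> 0} \<subseteq> F \<Longrightarrow> fsum f = sum f F"
  unfolding fsum_def by (rule sum.mono_neutral_left) auto

lemma fsum_nonzeroE:
  assumes "fsum f \<noteq> 0"
  obtains z where "f z \<noteq> 0"
  using assms unfolding fsum_def by (metis (mono_tags, lifting) empty_Collect_eq sum.empty)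

lemma fsum_nonneg: "(\<And>z. 0 \<le> f z) \<Longrightarrow> 0 \<le> fsum f"
  unfolding fsum_def by (rule sum_nonneg) auto

lemma pw_pos: "0 < r \<Longrightarrow> pw r a = r powr a"
  by (simp add: pw_def)

lemma graded_T_bounded_below:
  assumes "graded_T A deg"
  obtains L where "\<And>\<tau>. L \<le> deg \<tau>"
  using assms unfolding graded_T_def bdd_below_def by blast

lemma graded_T_finite_deg_less:
  assumes "graded_T A deg"
  shows "finite {\<tau>. deg \<tau> < \<gamma>}"
proof -
  obtain L where L: "\<And>\<tau>. L \<le> deg \<tau>" using graded_T_bounded_below[OF assms] by blast
  define r where "r = \<bar>L\<bar> + \<bar>\<gamma>\<bar>"
  have "{\<tau>. deg \<tau> < \<gamma>} \<subseteq> (\<Union>a\<in>A \<inter> {-r..r}. {\<tau>. deg \<tau> = a})"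
  proof
    fix \<tau> assume "\<tau> \<in> {\<tau>. deg \<tau> < \<gamma>}"
    moreover have "deg \<tau> \<in> A" using assms unfolding graded_T_def by blast
    ultimately show "\<tau> \<in> (\<Union>a\<in>A \<inter> {-r..r}. {\<tau>. deg \<tau> = a})"
      using L[of \<tau>] unfolding r_def by auto
  qed
  moreover have "finite (\<Union>a\<in>A \<inter> {-r..r}. {\<tau>. deg \<tau> = a})"
    using assms unfolding graded_T_def by auto
  ultimately show ?thesis by (rule finite_subset)
qed

lemma support_subset_deg_less:
  fixes deg :: "'b \<Rightarrow> 'a::linorder"
  assumes "\<And>\<tau>. \<gamma> \<le> deg \<tau> \<Longrightarrow> u \<tau> = 0"
  shows "{\<tau>. u \<tau> \<noteq> 0} \<subseteq> {\<tau>. deg \<tau> < \<gamma>}"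
proof
  fix \<tau> assume "\<tau> \<in> {\<tau>. u \<tau> \<noteq> 0}"
  then show "\<tau> \<in> {\<tau>. deg \<tau> < \<gamma>}" using assms[of \<tau>] by (cases "deg \<tau> < \<gamma>") auto
qed

subsection \<open>The structure group action in coordinates\<close>

lemma Gam_kd: "Gam D h (kd \<tau>) \<sigma> = fsum (\<lambda>\<mu>. D \<tau> \<sigma> \<mu> * h \<mu>)"
  unfolding Gam_def by (subst fsum_eq_sum[of "{\<tau>}"]) (auto simp: kd_def)

lemma Gam_eq_sum:
  assumes "finite F" and "{\<tau>. u \<tau> \<noteq> 0} \<subseteq> F"
  shows "Gam D h u \<sigma> = (\<Sum>\<tau>\<in>F. u \<tau> * Gam D h (kd \<tau>) \<sigma>)"
proof -
  have "Gam D h u \<sigma> = fsum (\<lambda>\<tau>. u \<tau> * Gam D h (kd \<tau>) \<sigma>)"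
    unfolding Gam_kd by (simp add: Gam_def)
  also have "\<dots> = (\<Sum>\<tau>\<in>F. u \<tau> * Gam D h (kd \<tau>) \<sigma>)"
    using assms by (intro fsum_eq_sum) auto
  finally show ?thesis .
qed

lemma piT_eq_sum:
  assumes "finite F" and "{\<tau>. u \<tau> \<noteq> 0} \<subseteq> F"
  shows "piT P u \<phi> = (\<Sum>\<tau>\<in>F. u \<tau> * P \<tau> \<phi>)"
  unfolding piT_def using assms by (intro fsum_eq_sum) auto

lemma piT_diff:
  assumes "finite F" and "{\<tau>. u \<tau> \<noteq> 0} \<subseteq> F" and "{\<tau>. u' \<tau> \<noteq> 0} \<subseteq> F"
  shows "piT P (\<lambda>\<tau>. u \<tau> - u' \<tau>) \<phi> = piT P u \<phi> - piT P u' \<phi>"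
proof -
  have "piT P (\<lambda>\<tau>. u \<tau> - u' \<tau>) \<phi> = (\<Sum>\<tau>\<in>F. (u \<tau> - u' \<tau>) * P \<tau> \<phi>)"
    using assms by (intro piT_eq_sum) force+
  also have "\<dots> = (\<Sum>\<tau>\<in>F. u \<tau> * P \<tau> \<phi>) - (\<Sum>\<tau>\<in>F. u' \<tau> * P \<tau> \<phi>)"
    by (simp add: sum_subtractf left_diff_distrib)
  also have "\<dots> = piT P u \<phi> - piT P u' \<phi>"
    using piT_eq_sum[OF assms(1,2), where P = P and \<phi> = \<phi>]
      piT_eq_sum[OF assms(1,3), where P = P and \<phi> = \<phi>] by (rule arg_cong2[symmetric])
  finally show ?thesis .
qed

lemma comodule_deg_eq:
  assumes "comodule deg degp cop cou D" and "D \<tau> \<sigma> \<mu> \<noteq> 0"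
  shows "deg \<sigma> = deg \<tau> - degp \<mu>"
proof -
  have "\<forall>\<tau> \<sigma> \<mu>. D \<tau> \<sigma> \<mu> \<noteq> 0 \<longrightarrow> deg \<sigma> = deg \<tau> - degp \<mu>"
    using assms(1) unfolding comodule_def by (elim conjE)
  then show ?thesis using assms(2) by blast
qed

lemma comodule_finite_support:
  assumes "comodule deg degp cop cou D"
  shows "finite {\<mu>. D \<sigma> \<rho> \<mu> \<noteq> 0}"
proof -
  have "finite {(\<rho>', \<mu>). D \<sigma> \<rho>' \<mu> \<noteq> 0}"
    using assms unfolding comodule_def by (elim conjE) (rule spec)
  then have "finite (snd ` {(\<rho>', \<mu>). D \<sigma> \<rho>' \<mu> \<noteq> 0})" by (rule finite_imageI)
  moreover have "{\<mu>. D \<sigma> \<rho> \<mu> \<noteq> 0} \<subseteq> snd ` {(\<rho>', \<mu>). D \<sigma> \<rho>' \<mu> \<noteq> 0}"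
    by (auto intro: rev_image_eqI[of "(\<rho>, _)"])
  ultimately show ?thesis by (rule finite_subset[rotated])
qed

lemma comodule_Gam_kd_nonzero_deg_le:
  assumes "comodule deg degp cop cou D" and "\<And>\<mu>. 0 \<le> degp \<mu>"
    and "Gam D h (kd \<tau>) \<sigma> \<noteq> 0"
  shows "deg \<sigma> \<le> deg \<tau>"
proof -
  obtain \<mu> where "D \<tau> \<sigma> \<mu> * h \<mu> \<noteq> 0"
    using assms(3) unfolding Gam_kd by (rule fsum_nonzeroE)
  then have "deg \<sigma> = deg \<tau> - degp \<mu>" using assms(1) comodule_deg_eq by force
  then show ?thesis using assms(2)[of \<mu>] by linarith
qed

lemma comodule_Gam_vanishes_above:
  assumes "comodule deg degp cop cou D" and "\<And>\<mu>. 0 \<le> degp \<mu>"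
    and "finite {\<tau>. deg \<tau> < \<gamma>}" and "\<And>\<tau>. \<gamma> \<le> deg \<tau> \<Longrightarrow> u \<tau> = 0"
    and "\<gamma> \<le> deg \<sigma>"
  shows "Gam D h u \<sigma> = 0"
proof -
  have "Gam D h (kd \<tau>) \<sigma> = 0" if "deg \<tau> < \<gamma>" for \<tau>
    using comodule_Gam_kd_nonzero_deg_le[OF assms(1,2)] that assms(5) by force
  then show ?thesis
    by (simp add: Gam_eq_sum[OF assms(3) support_subset_deg_less[OF assms(4)]])
qed

lemma concrete_RS_finite_deg_less:
  "concrete_RS A deg Ap degp mp unit cop cou ant D \<Longrightarrow> finite {\<tau>. deg \<tau> < \<gamma>}"
  unfolding concrete_RS_def using graded_T_finite_deg_less by blast

lemma concrete_RS_Gam_vanishes_above: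
  assumes "concrete_RS A deg Ap degp mp unit cop cou ant D"
    and "\<And>\<tau>. \<gamma> \<le> deg \<tau> \<Longrightarrow> u \<tau> = 0" and "\<gamma> \<le> deg \<sigma>"
  shows "Gam D h u \<sigma> = 0"
proof -
  have "comodule deg degp cop cou D" "\<And>\<mu>. 0 \<le> degp \<mu>"
    using assms(1) unfolding concrete_RS_def graded_Tp_def by auto
  from this concrete_RS_finite_deg_less[OF assms(1)] assms(2,3) show ?thesis
    by (rule comodule_Gam_vanishes_above)
qed

subsection \<open>Estimates\<close>

definition coaction_l1_norm :: "('b \<Rightarrow> real) \<Rightarrow> ('b \<Rightarrow> 'b \<Rightarrow> 'c \<Rightarrow> real) \<Rightarrow> real \<Rightarrow> real" where
  "coaction_l1_norm deg D \<gamma> =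
     (\<Sum>\<rho>\<in>{\<rho>. deg \<rho> < \<gamma>}. \<Sum>\<sigma>\<in>{\<sigma>. deg \<sigma> < \<gamma>}. fsum (\<lambda>\<mu>. \<bar>D \<sigma> \<rho> \<mu>\<bar>))"

lemma coaction_l1_norm_nonneg: "0 \<le> coaction_l1_norm deg D \<gamma>"
  unfolding coaction_l1_norm_def by (intro sum_nonneg fsum_nonneg) auto

lemma abs_mult_Gam_kd_le:
  fixes r K1 K2 :: real
  assumes D: "comodule deg degp cop cou D"
    and r: "0 < r" and K: "0 \<le> K1" "0 \<le> K2"
    and a: "\<bar>a\<bar> \<le> K1 * r powr (\<gamma> - deg \<sigma>)"
    and h: "\<And>\<mu>. D \<sigma> \<rho> \<mu> \<noteq> 0 \<Longrightarrow> \<bar>h \<mu>\<bar> \<le> K2 * r powr degp \<mu>"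
  shows "\<bar>a * Gam D h (kd \<sigma>) \<rho>\<bar> \<le> K1 * K2 * r powr (\<gamma> - deg \<rho>) * fsum (\<lambda>\<mu>. \<bar>D \<sigma> \<rho> \<mu>\<bar>)"
proof -
  define M where "M = {\<mu>. D \<sigma> \<rho> \<mu> \<noteq> 0}"
  define B where "B = K1 * K2 * r powr (\<gamma> - deg \<rho>)"
  have M: "finite M" using comodule_finite_support[OF D] unfolding M_def .
  have coeff: "\<bar>a\<bar> * \<bar>h \<mu>\<bar> \<le> B" if "\<mu> \<in> M" for \<mu>
  proof -
    have "\<bar>a\<bar> * \<bar>h \<mu>\<bar> \<le> K1 * r powr (\<gamma> - deg \<sigma>) * (K2 * r powr degp \<mu>)"
      using a h that K unfolding M_def by (intro mult_mono) simp_all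
    also have "\<dots> = K1 * K2 * (r powr (\<gamma> - deg \<sigma>) * r powr degp \<mu>)"
      by (simp add: mult_ac)
    also have "\<dots> = B"
    proof -
      have "\<gamma> - deg \<sigma> + degp \<mu> = \<gamma> - deg \<rho>"
        using comodule_deg_eq[OF D] that unfolding M_def by simp
      then show ?thesis by (simp only: B_def powr_add[symmetric])
    qed
    finally show ?thesis .
  qed
  have "Gam D h (kd \<sigma>) \<rho> = (\<Sum>\<mu>\<in>M. D \<sigma> \<rho> \<mu> * h \<mu>)"
    unfolding Gam_kd using M by (intro fsum_eq_sum) (auto simp: M_def)
  then have "\<bar>a * Gam D h (kd \<sigma>) \<rho>\<bar> = \<bar>\<Sum>\<mu>\<in>M. a * D \<sigma> \<rho> \<mu> * h \<mu>\<bar>"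
    by (simp add: sum_distrib_left mult.assoc)
  also have "\<dots> \<le> (\<Sum>\<mu>\<in>M. \<bar>a * D \<sigma> \<rho> \<mu> * h \<mu>\<bar>)"
    by (rule sum_abs)
  also have "\<dots> = (\<Sum>\<mu>\<in>M. \<bar>a\<bar> * \<bar>h \<mu>\<bar> * \<bar>D \<sigma> \<rho> \<mu>\<bar>)"
    by (simp add: abs_mult mult_ac)
  also have "\<dots> \<le> (\<Sum>\<mu>\<in>M. B * \<bar>D \<sigma> \<rho> \<mu>\<bar>)"
    using coeff by (intro sum_mono mult_right_mono) auto
  also have "\<dots> = B * fsum (\<lambda>\<mu>. \<bar>D \<sigma> \<rho> \<mu>\<bar>)"
    by (simp add: fsum_def M_def sum_distrib_left)
  finally show ?thesis unfolding B_def .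
qed

lemma abs_Gam_le:
  fixes r K1 K2 :: real
  assumes D: "comodule deg degp cop cou D"
    and F: "finite {\<sigma>. deg \<sigma> < \<gamma>}"
    and L: "\<And>\<tau>. L \<le> deg \<tau>"
    and r: "0 < r" and K: "0 \<le> K1" "0 \<le> K2"
    and w_supp: "\<And>\<sigma>. \<gamma> \<le> deg \<sigma> \<Longrightarrow> w \<sigma> = 0"
    and w_bound: "\<And>\<sigma>. deg \<sigma> < \<gamma> \<Longrightarrow> \<bar>w \<sigma>\<bar> \<le> K1 * r powr (\<gamma> - deg \<sigma>)"
    and h_bound: "\<And>\<mu>. degp \<mu> \<le> \<gamma> - L \<Longrightarrow> \<bar>h \<mu>\<bar> \<le> K2 * pw r (degp \<mu>)"
    and \<rho>: "deg \<rho> < \<gamma>"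
  shows "\<bar>Gam D h w \<rho>\<bar> \<le> K1 * K2 * coaction_l1_norm deg D \<gamma> * r powr (\<gamma> - deg \<rho>)"
proof -
  define F where "F = {\<sigma>. deg \<sigma> < \<gamma>}"
  define B where "B = K1 * K2 * r powr (\<gamma> - deg \<rho>)"
  have w_F: "{\<sigma>. w \<sigma> \<noteq> 0} \<subseteq> F"
    unfolding F_def by (rule support_subset_deg_less) (rule w_supp)
  have term_bound: "\<bar>w \<sigma> * Gam D h (kd \<sigma>) \<rho>\<bar> \<le> B * fsum (\<lambda>\<mu>. \<bar>D \<sigma> \<rho> \<mu>\<bar>)"
    if "\<sigma> \<in> F" for \<sigma>
    unfolding B_def
  proof (rule abs_mult_Gam_kd_le[OF D r K])
    show "\<bar>w \<sigma>\<bar> \<le> K1 * r powr (\<gamma> - deg \<sigma>)" using w_bound that unfolding F_def by blast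
    show "\<bar>h \<mu>\<bar> \<le> K2 * r powr degp \<mu>" if "D \<sigma> \<rho> \<mu> \<noteq> 0" for \<mu>
    proof -
      have "degp \<mu> \<le> \<gamma> - L"
        using comodule_deg_eq[OF D that] L[of \<rho>] \<open>\<sigma> \<in> F\<close> unfolding F_def by simp
      then show ?thesis using h_bound pw_pos[OF r] by simp
    qed
  qed
  have N: "(\<Sum>\<sigma>\<in>F. fsum (\<lambda>\<mu>. \<bar>D \<sigma> \<rho> \<mu>\<bar>)) \<le> coaction_l1_norm deg D \<gamma>"
    unfolding coaction_l1_norm_def F_def[symmetric] using F \<rho>
    by (intro member_le_sum[of \<rho> F "\<lambda>\<rho>. \<Sum>\<sigma>\<in>F. fsum (\<lambda>\<mu>. \<bar>D \<sigma> \<rho> \<mu>\<bar>)"] sum_nonneg fsum_nonneg)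
      (auto simp: F_def)
  have "\<bar>Gam D h w \<rho>\<bar> = \<bar>\<Sum>\<sigma>\<in>F. w \<sigma> * Gam D h (kd \<sigma>) \<rho>\<bar>"
    by (rule arg_cong[where f = abs], rule Gam_eq_sum[OF F[folded F_def] w_F])
  also have "\<dots> \<le> (\<Sum>\<sigma>\<in>F. \<bar>w \<sigma> * Gam D h (kd \<sigma>) \<rho>\<bar>)"
    by (rule sum_abs)
  also have "\<dots> \<le> (\<Sum>\<sigma>\<in>F. B * fsum (\<lambda>\<mu>. \<bar>D \<sigma> \<rho> \<mu>\<bar>))"
    using term_bound by (rule sum_mono)
  also have "\<dots> \<le> B * coaction_l1_norm deg D \<gamma>"
    using N K by (simp add: B_def sum_distrib_left[symmetric] mult_left_mono)
  finally show ?thesis unfolding B_def by (simp add: mult_ac)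
qed

lemma abs_piT_heat_le:
  fixes r t K K' :: real
  assumes F: "finite {\<rho>. deg \<rho> < \<gamma>}"
    and u_supp: "\<And>\<rho>. \<gamma> \<le> deg \<rho> \<Longrightarrow> u \<rho> = 0"
    and u_bound: "\<And>\<rho>. deg \<rho> < \<gamma> \<Longrightarrow> \<bar>u \<rho>\<bar> \<le> K * r powr (\<gamma> - deg \<rho>)"
    and P_bound: "\<And>\<rho>. deg \<rho> < \<gamma> \<Longrightarrow> \<bar>P \<rho> \<phi>\<bar> \<le> K' * t powr (deg \<rho> / 2)"
    and nonneg: "0 \<le> K" "0 \<le> K'" "0 \<le> r" "0 \<le> t"
  shows "\<bar>piT P u \<phi>\<bar>
           \<le> K * K' * (\<Sum>\<rho>\<in>{\<rho>. deg \<rho> < \<gamma>}. t powr (deg \<rho> / 2) * (r + sqrt t) powr (\<gamma> - deg \<rho>))"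
proof -
  have term_bound:
    "\<bar>u \<rho> * P \<rho> \<phi>\<bar> \<le> K * K' * (t powr (deg \<rho> / 2) * (r + sqrt t) powr (\<gamma> - deg \<rho>))"
    if "deg \<rho> < \<gamma>" for \<rho>
  proof -
    have "\<bar>u \<rho> * P \<rho> \<phi>\<bar> \<le> K * r powr (\<gamma> - deg \<rho>) * (K' * t powr (deg \<rho> / 2))"
      unfolding abs_mult using u_bound P_bound that nonneg by (intro mult_mono) auto
    also have "\<dots> \<le> K * (r + sqrt t) powr (\<gamma> - deg \<rho>) * (K' * t powr (deg \<rho> / 2))"
      using nonneg that by (intro mult_right_mono mult_left_mono powr_mono2) auto
    finally show ?thesis by (simp add: mult_ac)
  qed
  have "\<bar>piT P u \<phi>\<bar> = \<bar>\<Sum>\<rho>\<in>{\<rho>. deg \<rho> < \<gamma>}. u \<rho> * P \<rho> \<phi>\<bar>"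
    by (rule arg_cong[where f = abs], rule piT_eq_sum[OF F], rule support_subset_deg_less)
      (rule u_supp)
  also have "\<dots> \<le> (\<Sum>\<rho>\<in>{\<rho>. deg \<rho> < \<gamma>}. \<bar>u \<rho> * P \<rho> \<phi>\<bar>)"
    by (rule sum_abs)
  also have "\<dots> \<le> (\<Sum>\<rho>\<in>{\<rho>. deg \<rho> < \<gamma>}.
                    K * K' * (t powr (deg \<rho> / 2) * (r + sqrt t) powr (\<gamma> - deg \<rho>)))"
    using term_bound by (intro sum_mono) auto
  finally show ?thesis by (simp add: sum_distrib_left)
qed

lemma is_model_reexpand_basis:
  assumes "is_model mp cop deg degp D Pix g"
  shows "Pix x \<tau> = piT (Pix y) (Gam D (g y x) (kd \<tau>))"
proof -
  have "\<forall>x y \<tau>. Pix x \<tau> = piT (Pix y) (Gam D (g y x) (kd \<tau>))"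
    using assms unfolding is_model_def by (elim conjE)
  then show ?thesis by blast
qed

lemma is_model_character_bound:
  assumes "is_model mp cop deg degp D Pix g"
  obtains K where "0 \<le> K"
    and "\<And>\<mu> x y. degp \<mu> \<le> c \<Longrightarrow> \<bar>g y x \<mu>\<bar> \<le> K * pw (norm (y - x)) (degp \<mu>)"
proof -
  have "\<forall>c. \<exists>K. \<forall>\<mu> x y. degp \<mu> \<le> c \<longrightarrow> \<bar>g y x \<mu>\<bar> \<le> K * pw (norm (y - x)) (degp \<mu>)"
    using assms unfolding is_model_def by (elim conjE)
  then obtain K where K: "\<And>\<mu> x y. degp \<mu> \<le> c \<Longrightarrow> \<bar>g y x \<mu>\<bar> \<le> K * pw (norm (y - x)) (degp \<mu>)"
    by blast
  have "K * pw r a \<le> \<bar>K\<bar> * pw r a" if "0 \<le> r" for r a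
    using that by (intro mult_right_mono) (auto simp: pw_def)
  with K show thesis by (intro that[of "\<bar>K\<bar>"]) (auto intro: order_trans[OF K])
qed

lemma is_model_heat_bound:
  assumes "is_model mp cop deg degp D Pix g"
  obtains K where "0 \<le> K"
    and "\<And>\<tau> t x. deg \<tau> \<le> c \<Longrightarrow> 0 < t \<Longrightarrow> t \<le> 1 \<Longrightarrow>
           \<bar>Pix x \<tau> (heat t x)\<bar> \<le> K * t powr (deg \<tau> / 2)"
proof -
  have "\<forall>c. \<exists>K. \<forall>\<tau> t x. deg \<tau> \<le> c \<longrightarrow> 0 < t \<longrightarrow> t \<le> 1 \<longrightarrow>
          \<bar>Pix x \<tau> (heat t x)\<bar> \<le> K * t powr (deg \<tau> / 2)"
    using assms unfolding is_model_def by (elim conjE)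
  then obtain K where K: "\<And>\<tau> t x. deg \<tau> \<le> c \<Longrightarrow> 0 < t \<Longrightarrow> t \<le> 1 \<Longrightarrow>
      \<bar>Pix x \<tau> (heat t x)\<bar> \<le> K * t powr (deg \<tau> / 2)"
    by blast
  have "K * t powr a \<le> \<bar>K\<bar> * t powr a" for t a :: real
    by (intro mult_right_mono) auto
  with K show thesis by (intro that[of "\<bar>K\<bar>"]) (auto intro: order_trans[OF K])
qed

lemma Dgamma_vanishes_above: "Dgamma deg D g \<gamma> v \<Longrightarrow> \<gamma> \<le> deg \<tau> \<Longrightarrow> v x \<tau> = 0"
  unfolding Dgamma_def by blast

lemma Dgamma_increment_vanishes_above:
  assumes "concrete_RS A deg Ap degp mp unit cop cou ant D" and "Dgamma deg D g \<gamma> v"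
    and "\<gamma> \<le> deg \<sigma>"
  shows "v y \<sigma> - Gam D h (v x) \<sigma> = 0"
proof -
  have "Gam D h (v x) \<sigma> = 0"
    by (rule concrete_RS_Gam_vanishes_above[OF assms(1) _ assms(3)])
      (rule Dgamma_vanishes_above[OF assms(2)])
  then show ?thesis using Dgamma_vanishes_above[OF assms(2,3)] by simp
qed

lemma Dgamma_increment_bound:
  assumes "Dgamma deg D g \<gamma> v"
  obtains K where "0 \<le> K"
    and "\<And>\<tau> x y. deg \<tau> < \<gamma> \<Longrightarrow> x \<noteq> y \<Longrightarrow>
           \<bar>v y \<tau> - Gam D (g y x) (v x) \<tau>\<bar> \<le> K * norm (y - x) powr (\<gamma> - deg \<tau>)"
proof -
  obtain K where K: "\<And>\<tau> x y. deg \<tau> < \<gamma> \<Longrightarrow> x \<noteq> y \<Longrightarrow>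
      \<bar>v x \<tau>\<bar> + \<bar>v y \<tau> - Gam D (g y x) (v x) \<tau>\<bar> / norm (y - x) powr (\<gamma> - deg \<tau>) \<le> K"
    using assms unfolding Dgamma_def by blast
  have "\<bar>v y \<tau> - Gam D (g y x) (v x) \<tau>\<bar> \<le> \<bar>K\<bar> * norm (y - x) powr (\<gamma> - deg \<tau>)"
    if "deg \<tau> < \<gamma>" "x \<noteq> y" for \<tau> x y
  proof -
    have "\<bar>v y \<tau> - Gam D (g y x) (v x) \<tau>\<bar> / norm (y - x) powr (\<gamma> - deg \<tau>) \<le> \<bar>K\<bar>"
      using K[OF that] by linarith
    then show ?thesis using that(2) by (simp add: divide_le_eq)
  qed
  then show thesis by (intro that[of "\<bar>K\<bar>"]) auto
qed

subsection \<open>Re-expansion of a model\<close>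

lemma model_reexpand:
  assumes RS: "concrete_RS A deg Ap degp mp unit cop cou ant D"
    and M: "is_model mp cop deg degp D Pix g"
    and u: "\<And>\<tau>. \<gamma> \<le> deg \<tau> \<Longrightarrow> u \<tau> = 0"
  shows "piT (Pix x) u \<phi> = piT (Pix y) (Gam D (g y x) u) \<phi>"
proof -
  define F where "F = {\<tau>. deg \<tau> < \<gamma>}"
  have F: "finite F" using concrete_RS_finite_deg_less[OF RS] unfolding F_def .
  have u_F: "{\<tau>. u \<tau> \<noteq> 0} \<subseteq> F" using u unfolding F_def by force
  have vanish: "{\<sigma>. Gam D (g y x) w \<sigma> \<noteq> 0} \<subseteq> F" if "\<And>\<tau>. \<gamma> \<le> deg \<tau> \<Longrightarrow> w \<tau> = 0" for w
    using concrete_RS_Gam_vanishes_above[OF RS that] unfolding F_def by force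
  have Pix_kd: "Pix x \<tau> \<phi> = (\<Sum>\<sigma>\<in>F. Gam D (g y x) (kd \<tau>) \<sigma> * Pix y \<sigma> \<phi>)" if "\<tau> \<in> F" for \<tau>
  proof -
    have "Pix x \<tau> \<phi> = piT (Pix y) (Gam D (g y x) (kd \<tau>)) \<phi>"
      using is_model_reexpand_basis[OF M, of x \<tau> y] by (rule fun_cong)
    also have "\<dots> = (\<Sum>\<sigma>\<in>F. Gam D (g y x) (kd \<tau>) \<sigma> * Pix y \<sigma> \<phi>)"
      by (rule piT_eq_sum[OF F], rule vanish) (use that in \<open>auto simp: F_def kd_def\<close>)
    finally show ?thesis .
  qed
  have "piT (Pix x) u \<phi> = (\<Sum>\<tau>\<in>F. u \<tau> * Pix x \<tau> \<phi>)"
    by (rule piT_eq_sum[OF F u_F])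
  also have "\<dots> = (\<Sum>\<tau>\<in>F. u \<tau> * (\<Sum>\<sigma>\<in>F. Gam D (g y x) (kd \<tau>) \<sigma> * Pix y \<sigma> \<phi>))"
    by (rule sum.cong) (simp_all add: Pix_kd)
  also have "\<dots> = (\<Sum>\<sigma>\<in>F. (\<Sum>\<tau>\<in>F. u \<tau> * Gam D (g y x) (kd \<tau>) \<sigma>) * Pix y \<sigma> \<phi>)"
    unfolding sum_distrib_left sum_distrib_right mult.assoc by (rule sum.swap)
  also have "\<dots> = (\<Sum>\<sigma>\<in>F. Gam D (g y x) u \<sigma> * Pix y \<sigma> \<phi>)"
    by (simp only: Gam_eq_sum[OF F u_F])
  also have "\<dots> = piT (Pix y) (Gam D (g y x) u) \<phi>"
    by (rule piT_eq_sum[OF F vanish[OF u], symmetric])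
  finally show ?thesis .
qed

lemma model_increment_reexpand:
  assumes RS: "concrete_RS A deg Ap degp mp unit cop cou ant D"
    and M: "is_model mp cop deg degp D Pix g"
    and v: "\<And>x \<tau>. \<gamma> \<le> deg \<tau> \<Longrightarrow> v x \<tau> = 0"
  shows "piT (Pix y) (v y) \<phi> - piT (Pix x) (v x) \<phi>
           = piT (Pix x) (Gam D (g x y) (\<lambda>\<sigma>. v y \<sigma> - Gam D (g y x) (v x) \<sigma>)) \<phi>"
proof -
  define F where "F = {\<tau>. deg \<tau> < \<gamma>}"
  have F: "finite F" using concrete_RS_finite_deg_less[OF RS] unfolding F_def .
  have Gv: "\<And>\<sigma>. \<gamma> \<le> deg \<sigma> \<Longrightarrow> Gam D (g y x) (v x) \<sigma> = 0"
    using concrete_RS_Gam_vanishes_above[OF RS v] .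
  have vy_F: "{\<sigma>. v y \<sigma> \<noteq> 0} \<subseteq> F" unfolding F_def by (rule support_subset_deg_less) (rule v)
  have Gv_F: "{\<sigma>. Gam D (g y x) (v x) \<sigma> \<noteq> 0} \<subseteq> F"
    unfolding F_def by (rule support_subset_deg_less) (rule Gv)
  have "piT (Pix x) (v x) \<phi> = piT (Pix y) (Gam D (g y x) (v x)) \<phi>"
    by (rule model_reexpand[OF RS M]) (rule v)
  then have "piT (Pix y) (v y) \<phi> - piT (Pix x) (v x) \<phi>
          = piT (Pix y) (v y) \<phi> - piT (Pix y) (Gam D (g y x) (v x)) \<phi>"
    by simp
  also have "\<dots> = piT (Pix y) (\<lambda>\<sigma>. v y \<sigma> - Gam D (g y x) (v x) \<sigma>) \<phi>"
    by (rule piT_diff[OF F vy_F Gv_F, symmetric])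
  also have "\<dots> = piT (Pix x) (Gam D (g x y) (\<lambda>\<sigma>. v y \<sigma> - Gam D (g y x) (v x) \<sigma>)) \<phi>"
    by (rule model_reexpand[OF RS M, where \<gamma> = \<gamma>]) (simp add: v Gv)
  finally show ?thesis .
qed

lemma Dgamma_reexpanded_increment_bound:
  assumes RS: "concrete_RS A deg Ap degp mp unit cop cou ant D"
    and M: "is_model mp cop deg degp D Pix g"
    and v: "Dgamma deg D g \<gamma> v"
  obtains K where "0 \<le> K"
    and "\<And>x y \<rho>. x \<noteq> y \<Longrightarrow> deg \<rho> < \<gamma> \<Longrightarrow>
           \<bar>Gam D (g x y) (\<lambda>\<sigma>. v y \<sigma> - Gam D (g y x) (v x) \<sigma>) \<rho>\<bar>
             \<le> K * norm (y - x) powr (\<gamma> - deg \<rho>)"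
proof -
  have cm: "comodule deg degp cop cou D" and gT: "graded_T A deg"
    using RS unfolding concrete_RS_def by blast+
  obtain L where L: "\<And>\<tau>. L \<le> deg \<tau>" using graded_T_bounded_below[OF gT] by blast
  obtain K1 where K1: "0 \<le> K1" "\<And>\<tau> x y. deg \<tau> < \<gamma> \<Longrightarrow> x \<noteq> y \<Longrightarrow>
      \<bar>v y \<tau> - Gam D (g y x) (v x) \<tau>\<bar> \<le> K1 * norm (y - x) powr (\<gamma> - deg \<tau>)"
    using Dgamma_increment_bound[OF v] by blast
  obtain K2 where K2: "0 \<le> K2"
    "\<And>\<mu> x y. degp \<mu> \<le> \<gamma> - L \<Longrightarrow> \<bar>g y x \<mu>\<bar> \<le> K2 * pw (norm (y - x)) (degp \<mu>)"
    using is_model_character_bound[OF M] by blast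
  have "\<bar>Gam D (g x y) (\<lambda>\<sigma>. v y \<sigma> - Gam D (g y x) (v x) \<sigma>) \<rho>\<bar>
          \<le> K1 * K2 * coaction_l1_norm deg D \<gamma> * norm (y - x) powr (\<gamma> - deg \<rho>)"
    if "x \<noteq> y" "deg \<rho> < \<gamma>" for x y \<rho>
  proof (rule abs_Gam_le[OF cm concrete_RS_finite_deg_less[OF RS] L _ K1(1) K2(1) _ _ _ that(2)])
    show "0 < norm (y - x)" using that(1) by simp
    show "\<gamma> \<le> deg \<sigma> \<Longrightarrow> v y \<sigma> - Gam D (g y x) (v x) \<sigma> = 0" for \<sigma>
      by (rule Dgamma_increment_vanishes_above[OF RS v])
    show "deg \<sigma> < \<gamma> \<Longrightarrow>
        \<bar>v y \<sigma> - Gam D (g y x) (v x) \<sigma>\<bar> \<le> K1 * norm (y - x) powr (\<gamma> - deg \<sigma>)" for \<sigma>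
      using K1(2) that(1) by blast
    show "degp \<mu> \<le> \<gamma> - L \<Longrightarrow> \<bar>g x y \<mu>\<bar> \<le> K2 * pw (norm (y - x)) (degp \<mu>)" for \<mu>
      using K2(2)[of \<mu> x y] by (simp add: norm_minus_commute)
  qed
  moreover have "0 \<le> K1 * K2 * coaction_l1_norm deg D \<gamma>"
    using K1(1) K2(1) coaction_l1_norm_nonneg by (intro mult_nonneg_nonneg)
  ultimately show thesis by (intro that[of "K1 * K2 * coaction_l1_norm deg D \<gamma>"])
qed

theorem proposition7:
  fixes A Ap :: "real set"
    and deg :: "'b \<Rightarrow> real" and degp :: "'c \<Rightarrow> real"
    and mp cop :: "'c \<Rightarrow> 'c \<Rightarrow> 'c \<Rightarrow> real" and unit cou :: "'c \<Rightarrow> real"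
    and ant :: "'c \<Rightarrow> 'c \<Rightarrow> real" and D :: "'b \<Rightarrow> 'b \<Rightarrow> 'c \<Rightarrow> real"
    and Pix :: "'a::euclidean_space \<Rightarrow> 'b \<Rightarrow> ('a \<Rightarrow> real) \<Rightarrow> real"
    and g :: "'a \<Rightarrow> 'a \<Rightarrow> 'c \<Rightarrow> real"
    and \<gamma> :: real and v :: "'a \<Rightarrow> 'b \<Rightarrow> real"
  assumes "concrete_RS A deg Ap degp mp unit cop cou ant D"
    and "is_model mp cop deg degp D Pix g"
    and "Dgamma deg D g \<gamma> v"
  shows "\<exists>C. \<forall>x y t. 0 < t \<longrightarrow> t \<le> 1 \<longrightarrow>
           \<bar>piT (Pix y) (v y) (heat t x) - piT (Pix x) (v x) (heat t x)\<bar>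
             \<le> C * (\<Sum>\<tau>\<in>{\<tau>. deg \<tau> < \<gamma>}. t powr (deg \<tau> / 2) * (norm (y - x) + sqrt t) powr (\<gamma> - deg \<tau>))"
proof -
  have F: "finite {\<tau>. deg \<tau> < \<gamma>}" by (rule concrete_RS_finite_deg_less[OF assms(1)])
  have v_supp: "\<And>x \<tau>. \<gamma> \<le> deg \<tau> \<Longrightarrow> v x \<tau> = 0" by (rule Dgamma_vanishes_above[OF assms(3)])
  obtain K where K: "0 \<le> K" "\<And>x y \<rho>. x \<noteq> y \<Longrightarrow> deg \<rho> < \<gamma> \<Longrightarrow>
      \<bar>Gam D (g x y) (\<lambda>\<sigma>. v y \<sigma> - Gam D (g y x) (v x) \<sigma>) \<rho>\<bar> \<le> K * norm (y - x) powr (\<gamma> - deg \<rho>)"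
    using Dgamma_reexpanded_increment_bound[OF assms] by blast
  obtain K' where K': "0 \<le> K'" "\<And>\<tau> t x. deg \<tau> \<le> \<gamma> \<Longrightarrow> 0 < t \<Longrightarrow> t \<le> 1 \<Longrightarrow>
      \<bar>Pix x \<tau> (heat t x)\<bar> \<le> K' * t powr (deg \<tau> / 2)"
    using is_model_heat_bound[OF assms(2)] by blast
  have "\<bar>piT (Pix y) (v y) (heat t x) - piT (Pix x) (v x) (heat t x)\<bar>
      \<le> K * K' * (\<Sum>\<tau>\<in>{\<tau>. deg \<tau> < \<gamma>}. t powr (deg \<tau> / 2) * (norm (y - x) + sqrt t) powr (\<gamma> - deg \<tau>))"
    if t: "0 < t" "t \<le> 1" for x y t
  proof (cases "x = y")
    case True
    then show ?thesis using K(1) K'(1) by (simp add: sum_nonneg)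
  next
    case False
    let ?w = "\<lambda>\<sigma>. v y \<sigma> - Gam D (g y x) (v x) \<sigma>"
    have increment: "piT (Pix y) (v y) (heat t x) - piT (Pix x) (v x) (heat t x)
        = piT (Pix x) (Gam D (g x y) ?w) (heat t x)"
      by (rule model_increment_reexpand[OF assms(1,2)]) (rule v_supp)
    show ?thesis unfolding increment
    proof (rule abs_piT_heat_le[OF F])
      show "\<gamma> \<le> deg \<sigma> \<Longrightarrow> Gam D (g x y) ?w \<sigma> = 0" for \<sigma>
        by (rule concrete_RS_Gam_vanishes_above[OF assms(1)])
          (rule Dgamma_increment_vanishes_above[OF assms(1,3)])
    qed (use K(1) K(2)[OF False] K' t in auto)
  qed
  then show ?thesis by blast
qed

end
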